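(* Let $\alpha\geq1$, $N>0$, $B_N(x_1,x_2,x_3):=(\sin Nx_3,\cos Nx_3,0)$ and $\phi(x):=(1+|x|^2)^{-\alpha}$ on $\mathbb{R}^3$, and let $\omega_0^1:=\mathop{\mathrm{curl}}\mathop{\mathrm{curl}}(\phi B_N)$. If $N$ is sufficiently large compared with $\alpha$ ($N\gg\alpha$), then $\omega_0^1$ has no zeros on $\mathbb{R}^3$. *)

theory Defs
  imports "HOL-Analysis.Analysis"
begin

definition pdiff :: "3 \<Rightarrow> (real^3 \<Rightarrow> real) \<Rightarrow> real^3 \<Rightarrow> real" where
  "pdiff i f x = deriv (\<lambda>t. f (x + t *\<^sub>R axis i 1)) 0"

definition curl :: "(real^3 \<Rightarrow> real^3) \<Rightarrow> real^3 \<Rightarrow> real^3" where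
  "curl F x = vector
     [ pdiff 2 (\<lambda>y. F y $ 3) x - pdiff 3 (\<lambda>y. F y $ 2) x,
       pdiff 3 (\<lambda>y. F y $ 1) x - pdiff 1 (\<lambda>y. F y $ 3) x,
       pdiff 1 (\<lambda>y. F y $ 2) x - pdiff 2 (\<lambda>y. F y $ 1) x ]"

definition B :: "real \<Rightarrow> real^3 \<Rightarrow> real^3" where
  "B N x = vector [sin (N * x $ 3), cos (N * x $ 3), 0]"

definition phi :: "real \<Rightarrow> real^3 \<Rightarrow> real" where
  "phi \<alpha> x = (1 + (norm x)\<^sup>2) powr (- \<alpha>)"

definition omega01 :: "real \<Rightarrow> real \<Rightarrow> real^3 \<Rightarrow> real^3" where
  "omega01 \<alpha> N = curl (curl (\<lambda>x. phi \<alpha> x *\<^sub>R B N x))"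

end

theory Submission
  imports Defs
begin

text \<open>
  Write \<open>\<phi>\<^sub>\<alpha> = (1 + |x|\<^sup>2) powr -\<alpha>\<close>, so that \<open>\<nabla>\<phi>\<^sub>\<alpha> = -2\<alpha> \<phi>\<^sub>\<alpha>\<^sub>+\<^sub>1 x\<close>.
  Since \<open>curl B\<^sub>N = N B\<^sub>N\<close>, we get \<open>curl (\<phi>\<^sub>\<alpha> B\<^sub>N) = N \<phi>\<^sub>\<alpha> B\<^sub>N + \<nabla>\<phi>\<^sub>\<alpha> \<times> B\<^sub>N\<close>,
  and one more differentiation gives the pointwise identity
  \<open>\<omega> \<bullet> B\<^sub>N = N\<^sup>2 \<phi>\<^sub>\<alpha> + 4\<alpha> \<phi>\<^sub>\<alpha>\<^sub>+\<^sub>1 - 4\<alpha>(\<alpha>+1) \<phi>\<^sub>\<alpha>\<^sub>+\<^sub>2 |x \<times> B\<^sub>N|\<^sup>2\<close>.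
  As \<open>|x \<times> B\<^sub>N| \<le> |x|\<close> and \<open>\<phi>\<^sub>\<alpha>\<^sub>+\<^sub>2 |x|\<^sup>2 \<le> \<phi>\<^sub>\<alpha>\<close>, the right-hand side is at least
  \<open>(N\<^sup>2 - 4\<alpha>(\<alpha>+1)) \<phi>\<^sub>\<alpha>\<close>, which is positive for \<open>N \<ge> 2\<alpha> + 1\<close>.
\<close>

unbundle cross3_syntax

lemma axis_nth_neq [simp]: "j \<noteq> i \<Longrightarrow> axis i x $ j = 0"
  by (simp add: axis_def)

lemma pdiff_eqI:
  "((\<lambda>t. f (x + t *\<^sub>R axis i 1)) has_real_derivative D) (at 0) \<Longrightarrow> pdiff i f x = D"
  unfolding pdiff_def by (rule DERIV_imp_deriv)

lemma pdiff_const [simp]: "pdiff i (\<lambda>x. c) x = 0"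
  by (simp add: pdiff_def)

lemma phi_pos: "phi \<alpha> x > 0"
  using add_pos_nonneg[of 1 "(norm x)\<^sup>2"] by (simp add: phi_def)

lemma phi_add_mult_powr: "phi (\<alpha> + \<beta>) x * (1 + (norm x)\<^sup>2) powr \<beta> = phi \<alpha> x"
  using add_pos_nonneg[of 1 "(norm x)\<^sup>2"] by (simp add: phi_def powr_add[symmetric])

lemma norm_B [simp]: "norm (B N x) = 1"
  by (simp add: norm_eq_sqrt_inner inner_vec_def sum_3 B_def power2_eq_square[symmetric])

lemma has_real_derivative_phi_line [derivative_intros]:
  "((\<lambda>t. phi \<alpha> (x + t *\<^sub>R v)) has_real_derivative
      - 2 * \<alpha> * phi (\<alpha> + 1) (x + t *\<^sub>R v) * ((x + t *\<^sub>R v) \<bullet> v)) (at t)"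
proof -
  have "((\<lambda>t. 1 + (norm (x + t *\<^sub>R v))\<^sup>2) has_real_derivative 2 * ((x + t *\<^sub>R v) \<bullet> v)) (at t)"
    unfolding power2_norm_eq_inner
    by (auto intro!: derivative_eq_intros simp: inner_commute algebra_simps)
  from DERIV_fun_powr[OF this, of "- \<alpha>"] show ?thesis
    by (simp add: phi_def add_pos_nonneg mult_ac)
qed

lemma curl_phi_B:
  "curl (\<lambda>x. phi \<alpha> x *\<^sub>R B N x) y =
     N *\<^sub>R (phi \<alpha> y *\<^sub>R B N y) - (2 * \<alpha> * phi (\<alpha> + 1) y) *\<^sub>R (y \<times> B N y)"
proof -
  let ?F = "\<lambda>x. phi \<alpha> x *\<^sub>R B N x"
  have F3: "(\<lambda>x. ?F x $ 3) = (\<lambda>x. 0)"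
    by (simp add: B_def)
  have d21: "pdiff 2 (\<lambda>x. ?F x $ 1) y = - 2 * \<alpha> * phi (\<alpha> + 1) y * y$2 * sin (N * y$3)"
    by (rule pdiff_eqI) (auto intro!: derivative_eq_intros simp: B_def inner_axis)
  have d31: "pdiff 3 (\<lambda>x. ?F x $ 1) y =
      - 2 * \<alpha> * phi (\<alpha> + 1) y * y$3 * sin (N * y$3) + N * phi \<alpha> y * cos (N * y$3)"
    by (rule pdiff_eqI) (auto intro!: derivative_eq_intros simp: B_def inner_axis)
  have d12: "pdiff 1 (\<lambda>x. ?F x $ 2) y = - 2 * \<alpha> * phi (\<alpha> + 1) y * y$1 * cos (N * y$3)"
    by (rule pdiff_eqI) (auto intro!: derivative_eq_intros simp: B_def inner_axis)
  have d32: "pdiff 3 (\<lambda>x. ?F x $ 2) y =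
      - 2 * \<alpha> * phi (\<alpha> + 1) y * y$3 * cos (N * y$3) - N * phi \<alpha> y * sin (N * y$3)"
    by (rule pdiff_eqI) (auto intro!: derivative_eq_intros simp: B_def inner_axis)
  show ?thesis
    unfolding curl_def F3 d21 d31 d12 d32
    by (simp add: vec_eq_iff forall_3 cross_components B_def algebra_simps)
qed

lemma inner_omega01_B:
  "omega01 \<alpha> N x \<bullet> B N x =
     N\<^sup>2 * phi \<alpha> x + 4 * \<alpha> * phi (\<alpha> + 1) x
     - 4 * \<alpha> * (\<alpha> + 1) * phi (\<alpha> + 2) x * (norm (x \<times> B N x))\<^sup>2"
proof -
  let ?u = "curl (\<lambda>x. phi \<alpha> x *\<^sub>R B N x)"
  let ?s = "sin (N * x$3)" and ?k = "cos (N * x$3)"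
  let ?w = "x$1 * ?k - x$2 * ?s"
  have d23: "pdiff 2 (\<lambda>y. ?u y $ 3) x =
      4 * \<alpha> * (\<alpha> + 1) * phi (\<alpha> + 2) x * x$2 * ?w + 2 * \<alpha> * phi (\<alpha> + 1) x * ?s"
    unfolding curl_phi_B
    by (rule pdiff_eqI)
      (auto intro!: derivative_eq_intros simp: B_def cross_components inner_axis algebra_simps)
  have d13: "pdiff 1 (\<lambda>y. ?u y $ 3) x =
      4 * \<alpha> * (\<alpha> + 1) * phi (\<alpha> + 2) x * x$1 * ?w - 2 * \<alpha> * phi (\<alpha> + 1) x * ?k"
    unfolding curl_phi_B
    by (rule pdiff_eqI)
      (auto intro!: derivative_eq_intros simp: B_def cross_components inner_axis algebra_simps)
  have d32: "pdiff 3 (\<lambda>y. ?u y $ 2) x =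
      - N\<^sup>2 * phi \<alpha> x * ?s - 4 * \<alpha> * N * x$3 * phi (\<alpha> + 1) x * ?k
      - 2 * \<alpha> * phi (\<alpha> + 1) x * ?s
      + 4 * \<alpha> * (\<alpha> + 1) * phi (\<alpha> + 2) x * (x$3)\<^sup>2 * ?s"
    unfolding curl_phi_B
    by (rule pdiff_eqI)
      (auto intro!: derivative_eq_intros
        simp: B_def cross_components inner_axis algebra_simps power2_eq_square)
  have d31: "pdiff 3 (\<lambda>y. ?u y $ 1) x =
      N\<^sup>2 * phi \<alpha> x * ?k - 4 * \<alpha> * N * x$3 * phi (\<alpha> + 1) x * ?s
      + 2 * \<alpha> * phi (\<alpha> + 1) x * ?k
      - 4 * \<alpha> * (\<alpha> + 1) * phi (\<alpha> + 2) x * (x$3)\<^sup>2 * ?k"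
    unfolding curl_phi_B
    by (rule pdiff_eqI)
      (auto intro!: derivative_eq_intros
        simp: B_def cross_components inner_axis algebra_simps power2_eq_square)
  have cross: "(norm (x \<times> B N x))\<^sup>2 = (x$3)\<^sup>2 + ?w\<^sup>2"
    by (simp add: power2_norm_eq_inner inner_vec_def sum_3 cross_components B_def)
      (use sin_cos_squared_add[of "N * x$3"] in algebra)
  show ?thesis
    unfolding omega01_def curl_def[of ?u] cross
    by (simp add: inner_vec_def sum_3 d23 d13 d32 d31, simp add: B_def)
      (use sin_cos_squared_add[of "N * x$3"] in algebra)
qed

lemma inner_omega01_B_pos:
  assumes "\<alpha> \<ge> 0" and "N \<ge> 2 * \<alpha> + 1"
  shows "omega01 \<alpha> N x \<bullet> B N x > 0"
proof -
  have "(norm (x \<times> B N x))\<^sup>2 \<le> (norm x)\<^sup>2"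
    using norm_cross_dot[of x "B N x"] zero_le_power2[of "x \<bullet> B N x"]
    by (simp only: norm_B mult_1_right)
  also have "\<dots> \<le> (1 + (norm x)\<^sup>2)\<^sup>2"
    by (simp add: power2_eq_square algebra_simps)
  finally have "phi (\<alpha> + 2) x * (norm (x \<times> B N x))\<^sup>2
      \<le> phi (\<alpha> + 2) x * (1 + (norm x)\<^sup>2)\<^sup>2"
    using phi_pos by (intro mult_left_mono) (auto simp: less_imp_le)
  also have "\<dots> = phi \<alpha> x"
    using phi_add_mult_powr[of \<alpha> 2 x] by (simp add: powr_numeral add_pos_nonneg)
  finally have cross_bound: "phi (\<alpha> + 2) x * (norm (x \<times> B N x))\<^sup>2 \<le> phi \<alpha> x" .
  have "4 * \<alpha> * (\<alpha> + 1) < N\<^sup>2"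
  proof -
    have "(2 * \<alpha> + 1)\<^sup>2 \<le> N\<^sup>2"
      using assms by (intro power_mono) auto
    then show ?thesis by (simp add: power2_eq_square algebra_simps)
  qed
  then have "0 < (N\<^sup>2 - 4 * \<alpha> * (\<alpha> + 1)) * phi \<alpha> x"
    using phi_pos by simp
  also have "\<dots> \<le> N\<^sup>2 * phi \<alpha> x
      - 4 * \<alpha> * (\<alpha> + 1) * (phi (\<alpha> + 2) x * (norm (x \<times> B N x))\<^sup>2)"
    using mult_left_mono[OF cross_bound, of "4 * \<alpha> * (\<alpha> + 1)"] assms(1)
    by (simp add: algebra_simps)
  also have "\<dots> \<le> omega01 \<alpha> N x \<bullet> B N x"
    using assms(1) phi_pos[of "\<alpha> + 1" x] by (simp add: inner_omega01_B)
  finally show ?thesis .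
qed

theorem proposition4p1:
  fixes \<alpha> :: real
  assumes "\<alpha> \<ge> 1"
  shows "\<exists>N0>0. \<forall>N::real. N \<ge> N0 \<longrightarrow> (\<forall>x::real^3. omega01 \<alpha> N x \<noteq> 0)"
proof (intro exI[of _ "2 * \<alpha> + 1"] conjI allI impI)
  show "2 * \<alpha> + 1 > 0"
    using assms by simp
next
  fix N :: real and x :: "real^3"
  assume "N \<ge> 2 * \<alpha> + 1"
  then have "omega01 \<alpha> N x \<bullet> B N x > 0"
    using assms by (intro inner_omega01_B_pos) auto
  then show "omega01 \<alpha> N x \<noteq> 0"
    by auto
qed

end
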